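(* Let $\rho_{ABC}\in M_2(\mathbb{C})\otimes M_2(\mathbb{C})\otimes M_d(\mathbb{C})$ be a state with $\mathrm{rank}(\rho_{ABC})=2$. Let $\{M_{a|0}\}_{a=0}^1$ and $\{M_{a|1}\}_{a=0}^1$ be POVMs on subsystem $A$, and assume that for both $a\in\{0,1\}$ the operator $\rho_{a|0}=\mathrm{Tr}_A\big((M_{a|0}\otimes\mathbb{1}\otimes\mathbb{1})\rho_{ABC}\big)$ on $\mathbb{C}^2\otimes\mathbb{C}^d$ (systems $B,C$) has rank one and is (proportional to the projector onto) an entangled vector. Then there exist projective measurements $\{Q_{b|0}\}_{b=0}^1,\{Q_{b|1}\}_{b=0}^1$ on subsystem $B$ such that the assemblage $\Sigma=\{\sigma_{ab|xy}\}$, $\sigma_{ab|xy}=\mathrm{Tr}_{AB}\big((M_{a|x}\otimes Q_{b|y}\otimes\mathbb{1})\rho_{ABC}\big)$ ($a,b,x,y\in\{0,1\}$), is on the edge of the set of no-signaling assemblages.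
   Context: Scenario with two untrusted parties, binary outcomes $a,b\in\{0,1\}$ and binary settings $x,y\in\{0,1\}$, trusted system $\mathbb{C}^d$. A no-signaling assemblage is a collection of positive semidefinite operators $\sigma_{ab|xy}$ on $\mathbb{C}^d$ with $\sum_{a,b}\sigma_{ab|xy}=\rho$ independent of $x,y$ and of trace one, $\sum_b\sigma_{ab|xy}$ independent of $y$, and $\sum_a\sigma_{ab|xy}$ independent of $x$. An LHS assemblage is one of the form $\sigma_{ab|xy}=\sum_j q_j p_j(a|x)p'_j(b|y)\rho_j$ with probability weights $q_j$, density operators $\rho_j$ and conditional probability distributions $p_j,p'_j$. A no-signaling assemblage $\Sigma$ is on the edge if whenever $\Sigma=\epsilon\Sigma_1+(1-\epsilon)\Sigma_2$ with $\epsilon\in[0,1]$, $\Sigma_1$ LHS and $\Sigma_2$ no-signaling, necessarily $\epsilon=0$. *)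

theory Defs
  imports "Jordan_Normal_Form.DL_Rank" "Jordan_Normal_Form.Schur_Decomposition"
begin

text \<open>Operators on C^n are complex n x n matrices (JNF). Tensor products are Kronecker
products with the standard index convention (first factor is the most significant index).\<close>

definition kron :: "complex mat \<Rightarrow> complex mat \<Rightarrow> complex mat" where
  "kron A B = mat (dim_row A * dim_row B) (dim_col A * dim_col B)
     (\<lambda>(i,j). A $$ (i div dim_row B, j div dim_col B) * B $$ (i mod dim_row B, j mod dim_col B))"

definition kron_vec :: "complex vec \<Rightarrow> complex vec \<Rightarrow> complex vec" where
  "kron_vec u v = vec (dim_vec u * dim_vec v) (\<lambda>i. u $ (i div dim_vec v) * v $ (i mod dim_vec v))"

definition trace_mat :: "complex mat \<Rightarrow> complex" where
  "trace_mat A = (\<Sum>i<dim_row A. A $$ (i,i))"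

definition ptrace_fst :: "nat \<Rightarrow> nat \<Rightarrow> complex mat \<Rightarrow> complex mat" where
  "ptrace_fst m n X = mat n n (\<lambda>(i,j). \<Sum>k<m. X $$ (k*n+i, k*n+j))"

definition outer :: "complex vec \<Rightarrow> complex vec \<Rightarrow> complex mat" where
  "outer u v = mat (dim_vec u) (dim_vec v) (\<lambda>(i,j). u $ i * cnj (v $ j))"

definition hermitian :: "nat \<Rightarrow> complex mat \<Rightarrow> bool" where
  "hermitian n A \<longleftrightarrow> A \<in> carrier_mat n n \<and> mat_adjoint A = A"

definition psd :: "nat \<Rightarrow> complex mat \<Rightarrow> bool" where
  "psd n A \<longleftrightarrow> hermitian n A \<and>
     (\<forall>v \<in> carrier_vec n. Im ((A *\<^sub>v v) \<bullet>c v) = 0 \<and> 0 \<le> Re ((A *\<^sub>v v) \<bullet>c v))"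

definition density :: "nat \<Rightarrow> complex mat \<Rightarrow> bool" where
  "density n A \<longleftrightarrow> psd n A \<and> trace_mat A = 1"

definition mrank :: "nat \<Rightarrow> complex mat \<Rightarrow> nat" where
  "mrank n A = vec_space.rank n (A :: complex mat)"

definition povm2 :: "nat \<Rightarrow> complex mat \<Rightarrow> complex mat \<Rightarrow> bool" where
  "povm2 n E0 E1 \<longleftrightarrow> psd n E0 \<and> psd n E1 \<and> E0 + E1 = 1\<^sub>m n"

definition projective2 :: "nat \<Rightarrow> complex mat \<Rightarrow> complex mat \<Rightarrow> bool" where
  "projective2 n P0 P1 \<longleftrightarrow> hermitian n P0 \<and> hermitian n P1 \<and>
     P0 * P0 = P0 \<and> P1 * P1 = P1 \<and> P0 + P1 = 1\<^sub>m n"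

definition entangled :: "nat \<Rightarrow> nat \<Rightarrow> complex vec \<Rightarrow> bool" where
  "entangled m n \<psi> \<longleftrightarrow> \<psi> \<in> carrier_vec (m*n) \<and>
     \<not> (\<exists>u \<in> carrier_vec m. \<exists>v \<in> carrier_vec n. \<psi> = kron_vec u v)"

text \<open>Assemblage: S a b x y = sigma_{ab|xy}; only indices in {0,1} are relevant.\<close>
type_synonym assemblage = "nat \<Rightarrow> nat \<Rightarrow> nat \<Rightarrow> nat \<Rightarrow> complex mat"

abbreviation bits :: "nat set" where "bits \<equiv> {0,1}"

definition no_signaling :: "nat \<Rightarrow> assemblage \<Rightarrow> bool" where
  "no_signaling d S \<longleftrightarrow>
     (\<forall>a\<in>bits. \<forall>b\<in>bits. \<forall>x\<in>bits. \<forall>y\<in>bits. psd d (S a b x y)) \<and>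
     (\<exists>\<rho>. \<rho> \<in> carrier_mat d d \<and> trace_mat \<rho> = 1 \<and>
        (\<forall>x\<in>bits. \<forall>y\<in>bits. S 0 0 x y + S 0 1 x y + S 1 0 x y + S 1 1 x y = \<rho>)) \<and>
     (\<forall>a\<in>bits. \<forall>x\<in>bits. S a 0 x 0 + S a 1 x 0 = S a 0 x 1 + S a 1 x 1) \<and>
     (\<forall>b\<in>bits. \<forall>y\<in>bits. S 0 b 0 y + S 1 b 0 y = S 0 b 1 y + S 1 b 1 y)"

definition LHS :: "nat \<Rightarrow> assemblage \<Rightarrow> bool" where
  "LHS d S \<longleftrightarrow> (\<exists>(N::nat) (q::nat \<Rightarrow> real) (p::nat \<Rightarrow> nat \<Rightarrow> nat \<Rightarrow> real)
        (p'::nat \<Rightarrow> nat \<Rightarrow> nat \<Rightarrow> real) (r::nat \<Rightarrow> complex mat).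
     (\<forall>j<N. 0 \<le> q j) \<and> (\<Sum>j<N. q j) = 1 \<and>
     (\<forall>j<N. density d (r j)) \<and>
     (\<forall>j<N. \<forall>a\<in>bits. \<forall>x\<in>bits. 0 \<le> p j a x \<and> 0 \<le> p' j a x) \<and>
     (\<forall>j<N. \<forall>x\<in>bits. p j 0 x + p j 1 x = 1 \<and> p' j 0 x + p' j 1 x = 1) \<and>
     (\<forall>a\<in>bits. \<forall>b\<in>bits. \<forall>x\<in>bits. \<forall>y\<in>bits.
        S a b x y = mat d d (\<lambda>ij. \<Sum>j<N. complex_of_real (q j * p j a x * p' j b y) * r j $$ ij)))"

definition on_edge :: "nat \<Rightarrow> assemblage \<Rightarrow> bool" where
  "on_edge d S \<longleftrightarrow> no_signaling d S \<and>
     (\<forall>(\<epsilon>::real) S1 S2. 0 \<le> \<epsilon> \<and> \<epsilon> \<le> 1 \<and> LHS d S1 \<and> no_signaling d S2 \<and>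
        (\<forall>a\<in>bits. \<forall>b\<in>bits. \<forall>x\<in>bits. \<forall>y\<in>bits.
           S a b x y = complex_of_real \<epsilon> \<cdot>\<^sub>m S1 a b x y + complex_of_real (1 - \<epsilon>) \<cdot>\<^sub>m S2 a b x y)
        \<longrightarrow> \<epsilon> = 0)"

end

theory Submission
  imports Defs
begin

text \<open>Bob measures in the computational basis for \<open>y = 0\<close> and in the basis \<open>|0\<rangle> \<plusminus> |1\<rangle>\<close> for
  \<open>y = 1\<close>. These are real rank-one projectors, and bilinearity of the partial trace makes the
  assemblage no-signaling. If Alice's outcome \<open>a\<close> for \<open>x = 0\<close> leaves \<open>BC\<close> in the entangled pure state
  \<open>\<psi>\<^sub>a\<close>, then \<open>\<sigma>(a b|0 y)\<close> is a multiple of the projector onto \<open>(\<langle>q\<^sub>b\<^sub>y| \<otimes> 1) \<psi>\<^sub>a\<close>, where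
  \<open>|q\<^sub>b\<^sub>y\<rangle>\<close> is Bob's eigenvector; as \<open>\<psi>\<^sub>a\<close> is entangled, the vectors obtained for \<open>y = 0\<close> and
  \<open>y = 1\<close> are linearly independent. An LHS part of positive weight would contain a hidden state
  lying below multiples of \<open>\<sigma>(a b|0 0)\<close> and of \<open>\<sigma>(a b'|0 1)\<close>, hence supported on two independent
  lines; such a state is zero, contradicting trace one.\<close>

section \<open>Quadratic forms on coordinate vectors\<close>

text \<open>Vectors of C^n are represented by coordinate functions on {..<n}; this avoids carrier
  side conditions in the sesquilinear-form calculations.\<close>

definition qform :: "nat \<Rightarrow> complex mat \<Rightarrow> (nat \<Rightarrow> complex) \<Rightarrow> complex" where
  "qform n A f = (\<Sum>i<n. \<Sum>j<n. cnj (f i) * A $$ (i,j) * f j)"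

definition cinner :: "nat \<Rightarrow> (nat \<Rightarrow> complex) \<Rightarrow> (nat \<Rightarrow> complex) \<Rightarrow> complex" where
  "cinner n x v = (\<Sum>j<n. cnj (x j) * v j)"

definition mat_apply :: "nat \<Rightarrow> complex mat \<Rightarrow> (nat \<Rightarrow> complex) \<Rightarrow> nat \<Rightarrow> complex" where
  "mat_apply n A v i = (\<Sum>j<n. A $$ (i,j) * v j)"

definition lin_indep2 :: "nat \<Rightarrow> (nat \<Rightarrow> complex) \<Rightarrow> (nat \<Rightarrow> complex) \<Rightarrow> bool" where
  "lin_indep2 n x1 x2 \<longleftrightarrow> (\<forall>a b. (\<forall>i<n. a * x1 i + b * x2 i = 0) \<longrightarrow> a = 0 \<and> b = 0)"

lemma index_mat_adjoint:
  "i < dim_col A \<Longrightarrow> j < dim_row A \<Longrightarrow> mat_adjoint A $$ (i,j) = cnj (A $$ (j,i))"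
  "dim_row (mat_adjoint A) = dim_col A" "dim_col (mat_adjoint A) = dim_row A"
  unfolding mat_adjoint_def by (simp_all add: mat_of_rows_index)

lemma hermitian_iff_entries:
  "hermitian n A \<longleftrightarrow> A \<in> carrier_mat n n \<and> (\<forall>i<n. \<forall>j<n. A $$ (i,j) = cnj (A $$ (j,i)))"
    (is "_ \<longleftrightarrow> ?carrier \<and> ?entries")
proof
  assume "hermitian n A"
  then have A: ?carrier and adj: "mat_adjoint A = A"
    unfolding hermitian_def by simp_all
  have "A $$ (i,j) = cnj (A $$ (j,i))" if "i < n" "j < n" for i j
  proof -
    have "mat_adjoint A $$ (i,j) = cnj (A $$ (j,i))"
      using A that by (intro index_mat_adjoint(1)) auto
    then show ?thesis unfolding adj .
  qed
  with A show "?carrier \<and> ?entries" by blast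
next
  assume h: "?carrier \<and> ?entries"
  then have A: ?carrier by (rule conjunct1)
  have "mat_adjoint A = A"
  proof (rule eq_matI)
    fix i j assume "i < dim_row A" "j < dim_col A"
    with A have ij: "i < n" "j < n" by auto
    with h have "A $$ (i, j) = cnj (A $$ (j, i))" by blast
    with A ij show "mat_adjoint A $$ (i, j) = A $$ (i, j)" by (subst index_mat_adjoint) auto
  qed (use A in \<open>simp_all add: index_mat_adjoint\<close>)
  with A show "hermitian n A" unfolding hermitian_def by simp
qed

lemma hermitian_entry:
  "hermitian n A \<Longrightarrow> i < n \<Longrightarrow> j < n \<Longrightarrow> A $$ (i,j) = cnj (A $$ (j,i))"
  unfolding hermitian_iff_entries by blast

lemma hermitian_carrier: "hermitian n A \<Longrightarrow> A \<in> carrier_mat n n"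
  unfolding hermitian_def by simp

lemma psd_hermitian: "psd n A \<Longrightarrow> hermitian n A"
  unfolding psd_def by simp

lemma psd_carrier: "psd n A \<Longrightarrow> A \<in> carrier_mat n n"
  by (simp add: psd_hermitian hermitian_carrier)

lemma cscalar_prod_mult_mat_vec:
  assumes "A \<in> carrier_mat n n"
  shows "(A *\<^sub>v vec n f) \<bullet>c vec n f = qform n A f"
proof -
  have "(A *\<^sub>v vec n f) \<bullet>c vec n f = (\<Sum>i<n. (\<Sum>j<n. A $$ (i,j) * f j) * cnj (f i))"
    using assms by (auto simp: scalar_prod_def row_def lessThan_atLeast0 intro!: sum.cong)
  also have "\<dots> = qform n A f"
    unfolding qform_def by (simp add: sum_distrib_left sum_distrib_right mult.commute mult.left_commute)
  finally show ?thesis .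
qed

lemma psd_qformD: "psd n A \<Longrightarrow> Im (qform n A f) = 0 \<and> 0 \<le> Re (qform n A f)"
  using cscalar_prod_mult_mat_vec[OF psd_carrier, of n A f] unfolding psd_def
  by (metis vec_carrier)

lemma psd_qformI:
  assumes h: "hermitian n A" and q: "\<And>f. Im (qform n A f) = 0 \<and> 0 \<le> Re (qform n A f)"
  shows "psd n A"
proof -
  have "(A *\<^sub>v v) \<bullet>c v = qform n A (\<lambda>i. v $ i)" if "v \<in> carrier_vec n" for v
  proof -
    have "v = vec n (\<lambda>i. v $ i)" using that by (intro eq_vecI) auto
    then show ?thesis using cscalar_prod_mult_mat_vec[OF hermitian_carrier[OF h]] by metis
  qed
  then show ?thesis unfolding psd_def using h q by simp
qed

lemma qform_add_scaled:
  "qform n A (\<lambda>k. v k + c * u k) = qform n A v + c * (\<Sum>i<n. \<Sum>j<n. cnj (v i) * A $$ (i,j) * u j)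
     + cnj c * (\<Sum>i<n. \<Sum>j<n. cnj (u i) * A $$ (i,j) * v j) + cnj c * c * qform n A u"
  unfolding qform_def by (simp add: sum.distrib sum_distrib_left algebra_simps)

lemma sesquilinear_hermitian_swap:
  assumes "hermitian n A"
  shows "(\<Sum>i<n. \<Sum>j<n. cnj (v i) * A $$ (i,j) * u j) = cnj (\<Sum>i<n. \<Sum>j<n. cnj (u i) * A $$ (i,j) * v j)"
proof -
  have "cnj (\<Sum>i<n. \<Sum>j<n. cnj (u i) * A $$ (i,j) * v j) = (\<Sum>i<n. \<Sum>j<n. u i * A $$ (j,i) * cnj (v j))"
  proof -
    have "cnj (A $$ (i,j)) = A $$ (j,i)" if "i < n" "j < n" for i j
      using hermitian_entry[OF assms that(2,1)] by simp
    then show ?thesis by (auto intro!: sum.cong)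
  qed
  also have "\<dots> = (\<Sum>j<n. \<Sum>i<n. u i * A $$ (j,i) * cnj (v j))" by (rule sum.swap)
  finally show ?thesis by (simp add: mult.commute mult.left_commute)
qed

lemma cinner_self: "cinner n u u = complex_of_real (\<Sum>i<n. (cmod (u i))\<^sup>2)"
  unfolding cinner_def of_real_sum by (intro sum.cong refl) (metis complex_norm_square mult.commute)

lemma cinner_self_eq_0D: "cinner n u u = 0 \<Longrightarrow> i < n \<Longrightarrow> u i = 0"
  unfolding cinner_self of_real_eq_0_iff by (subst (asm) sum_nonneg_eq_0_iff) auto

lemma cinner_add_right: "cinner n x (\<lambda>k. a * u k + b * w k) = a * cinner n x u + b * cinner n x w"
  unfolding cinner_def by (simp add: sum.distrib sum_distrib_left algebra_simps)

lemma cinner_add_left: "cinner n (\<lambda>k. a * u k + b * w k) x = cnj a * cinner n u x + cnj b * cinner n w x"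
  unfolding cinner_def by (simp add: sum.distrib sum_distrib_left algebra_simps)

text \<open>The kernel of a psd form is its isotropic cone: expanding the form at \<open>v + t A v\<close> gives
  \<open>2 t |A v|\<^sup>2 + t\<^sup>2 <A v, A (A v)> \<ge> 0\<close> for all real \<open>t\<close>, which forces \<open>A v = 0\<close>.\<close>
lemma psd_qform_eq_0_imp_mat_apply_eq_0:
  assumes A: "psd n A" and v: "qform n A v = 0" and i: "i < n"
  shows "mat_apply n A v i = 0"
proof -
  let ?u = "mat_apply n A v"
  define s where "s = (\<Sum>i<n. (cmod (?u i))\<^sup>2)"
  define m where "m = Re (qform n A ?u)"
  have m: "m \<ge> 0" using psd_qformD[OF A] m_def by blast
  have uv: "(\<Sum>i<n. \<Sum>j<n. cnj (?u i) * A $$ (i,j) * v j) = complex_of_real s"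
  proof -
    have "(\<Sum>i<n. \<Sum>j<n. cnj (?u i) * A $$ (i,j) * v j) = cinner n ?u ?u"
      by (simp add: cinner_def mat_apply_def sum_distrib_left mult.assoc)
    then show ?thesis unfolding cinner_self s_def .
  qed
  have vu: "(\<Sum>i<n. \<Sum>j<n. cnj (v i) * A $$ (i,j) * ?u j) = complex_of_real s"
    using sesquilinear_hermitian_swap[OF psd_hermitian[OF A], of v ?u] uv by simp
  have expand: "0 \<le> 2*t*s + t\<^sup>2 * m" for t :: real
  proof -
    have "qform n A (\<lambda>k. v k + complex_of_real t * ?u k) =
        complex_of_real (2*t*s) + complex_of_real (t\<^sup>2) * qform n A ?u"
      unfolding qform_add_scaled uv vu v by (simp add: power2_eq_square)
    then have "Re (qform n A (\<lambda>k. v k + complex_of_real t * ?u k)) = 2*t*s + t\<^sup>2 * m"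
      unfolding m_def by simp
    then show ?thesis using psd_qformD[OF A] by metis
  qed
  have "s = 0"
  proof (rule ccontr)
    assume "s \<noteq> 0"
    then have s: "s > 0" unfolding s_def by (simp add: sum_nonneg order_le_neq_trans)
    define t where "t = - s / (1 + m)"
    have "0 \<le> 2*t*s + t\<^sup>2 * m" by (rule expand)
    also have "\<dots> \<le> 2*t*s + t\<^sup>2 * (1 + m)" by (simp add: algebra_simps)
    also have "\<dots> = - (s\<^sup>2 / (1 + m))"
      unfolding t_def using m by (simp add: field_simps power2_eq_square add_nonneg_eq_0_iff)
    also have "\<dots> < 0" using s m by simp
    finally show False by simp
  qed
  then show ?thesis unfolding s_def using i by (subst (asm) sum_nonneg_eq_0_iff) auto
qed

lemma lin_indep2_orthogonal_witness:
  assumes ind: "lin_indep2 n x1 x2"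
  obtains y where "cinner n x2 y = 0" and "cinner n x1 y \<noteq> 0"
proof -
  define y where "y = (\<lambda>k. cinner n x2 x2 * x1 k + (- cinner n x2 x1) * x2 k)"
  have y2: "cinner n x2 y = 0" unfolding y_def cinner_add_right by simp
  have "cinner n x2 x2 \<noteq> 0"
  proof
    assume "cinner n x2 x2 = 0"
    then have "\<forall>i<n. 0 * x1 i + 1 * x2 i = 0" using cinner_self_eq_0D by auto
    then show False using ind unfolding lin_indep2_def by (metis one_neq_zero)
  qed
  moreover have "cinner n x2 x2 = 0" if "cinner n x1 y = 0"
  proof -
    have "cinner n y y = 0" unfolding y_def cinner_add_left using that y2 by (simp add: y_def)
    then have "\<forall>i<n. cinner n x2 x2 * x1 i + (- cinner n x2 x1) * x2 i = 0"
      using cinner_self_eq_0D unfolding y_def by blast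
    then show ?thesis using ind unfolding lin_indep2_def by blast
  qed
  ultimately show ?thesis using that y2 by blast
qed

text \<open>Two hyperplanes with independent normals span everything, so a psd matrix vanishing on both
  is zero.\<close>
lemma psd_diag_eq_0_if_vanishes_on_two_hyperplanes:
  assumes r: "psd n r" and ind: "lin_indep2 n x1 x2"
    and h1: "\<And>v. cinner n x1 v = 0 \<Longrightarrow> qform n r v = 0"
    and h2: "\<And>v. cinner n x2 v = 0 \<Longrightarrow> qform n r v = 0"
    and i: "i < n"
  shows "r $$ (i,i) = 0"
proof -
  obtain y where y2: "cinner n x2 y = 0" and y1: "cinner n x1 y \<noteq> 0"
    using lin_indep2_orthogonal_witness[OF ind] .
  define e where "e = (\<lambda>j. if j = i then (1::complex) else 0)"
  define a where "a = cinner n x1 e / cinner n x1 y"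
  have "cinner n x1 (\<lambda>k. 1 * e k + (-a) * y k) = 0"
    unfolding cinner_add_right a_def using y1 by simp
  then have "mat_apply n r (\<lambda>k. 1 * e k + (-a) * y k) i = 0"
    using psd_qform_eq_0_imp_mat_apply_eq_0[OF r h1 i] by blast
  moreover have "mat_apply n r y i = 0"
    using psd_qform_eq_0_imp_mat_apply_eq_0[OF r h2[OF y2] i] .
  moreover have "mat_apply n r (\<lambda>k. 1 * e k + (-a) * y k) i = mat_apply n r e i - a * mat_apply n r y i"
    unfolding mat_apply_def by (simp add: sum.distrib sum_distrib_left algebra_simps sum_subtractf)
  moreover have "mat_apply n r e i = r $$ (i,i)"
    unfolding mat_apply_def e_def using i by (simp add: if_distrib cong: if_cong)
  ultimately show ?thesis by simp
qed

lemma qform_add_smult: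
  assumes "\<And>i j. i < n \<Longrightarrow> j < n \<Longrightarrow> A $$ (i,j) = a * B $$ (i,j) + b * C $$ (i,j)"
  shows "qform n A v = a * qform n B v + b * qform n C v"
  unfolding qform_def using assms by (simp add: sum.distrib sum_distrib_left algebra_simps)

lemma qform_sum:
  assumes "\<And>i j. i < n \<Longrightarrow> j < n \<Longrightarrow> A $$ (i,j) = (\<Sum>k<N. c k * B k $$ (i,j))"
  shows "qform n A v = (\<Sum>k<N. c k * qform n (B k) v)"
proof -
  have "qform n A v = (\<Sum>i<n. \<Sum>j<n. \<Sum>k<N. c k * (cnj (v i) * B k $$ (i,j) * v j))"
    unfolding qform_def using assms
    by (intro sum.cong refl) (simp add: sum_distrib_left sum_distrib_right algebra_simps)
  also have "\<dots> = (\<Sum>i<n. \<Sum>k<N. \<Sum>j<n. c k * (cnj (v i) * B k $$ (i,j) * v j))"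
    by (rule sum.cong[OF refl], rule sum.swap)
  also have "\<dots> = (\<Sum>k<N. \<Sum>i<n. \<Sum>j<n. c k * (cnj (v i) * B k $$ (i,j) * v j))"
    by (rule sum.swap)
  finally show ?thesis unfolding qform_def by (simp add: sum_distrib_left)
qed

lemma qform_eq_0_mixture_component:
  fixes cf :: "nat \<Rightarrow> real" and r :: "nat \<Rightarrow> complex mat"
  assumes eps: "0 < \<epsilon>" "\<epsilon> \<le> 1"
    and S: "S = complex_of_real \<epsilon> \<cdot>\<^sub>m mat d d (\<lambda>ij. \<Sum>k<N. complex_of_real (cf k) * r k $$ ij)
               + complex_of_real (1 - \<epsilon>) \<cdot>\<^sub>m S2"
    and S2: "psd d S2" and r: "\<And>k. k < N \<Longrightarrow> psd d (r k)" and cf: "\<And>k. k < N \<Longrightarrow> 0 \<le> cf k"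
    and j: "j < N" "cf j > 0" and v: "qform d S v = 0"
  shows "qform d (r j) v = 0"
proof -
  let ?S1 = "mat d d (\<lambda>ij. \<Sum>k<N. complex_of_real (cf k) * r k $$ ij)"
  have "qform d S v = complex_of_real \<epsilon> * qform d ?S1 v + complex_of_real (1 - \<epsilon>) * qform d S2 v"
    by (rule qform_add_smult) (use psd_carrier[OF S2] in \<open>simp add: S\<close>)
  also have "qform d ?S1 v = (\<Sum>k<N. complex_of_real (cf k) * qform d (r k) v)"
    by (rule qform_sum) simp
  finally have "Re (complex_of_real \<epsilon> * (\<Sum>k<N. complex_of_real (cf k) * qform d (r k) v)
      + complex_of_real (1 - \<epsilon>) * qform d S2 v) = 0"
    using v by simp
  then have mix: "\<epsilon> * (\<Sum>k<N. cf k * Re (qform d (r k) v)) + (1 - \<epsilon>) * Re (qform d S2 v) = 0"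
    by simp
  have nonneg: "0 \<le> cf k * Re (qform d (r k) v)" if "k \<in> {..<N}" for k
    using that cf psd_qformD[OF r] by simp
  have "0 \<le> (1 - \<epsilon>) * Re (qform d S2 v)" using eps psd_qformD[OF S2] by simp
  with mix have "\<epsilon> * (\<Sum>k<N. cf k * Re (qform d (r k) v)) \<le> 0" by linarith
  with eps have "(\<Sum>k<N. cf k * Re (qform d (r k) v)) \<le> 0"
    by (simp add: mult_le_0_iff)
  moreover have "cf j * Re (qform d (r j) v) \<le> (\<Sum>k<N. cf k * Re (qform d (r k) v))"
    using j by (intro member_le_sum nonneg) simp_all
  ultimately have "cf j * Re (qform d (r j) v) \<le> 0" by linarith
  with j have "Re (qform d (r j) v) \<le> 0" by (simp add: mult_le_0_iff)
  then show ?thesis using psd_qformD[OF r[OF j(1)], of v] by (simp add: complex_eq_iff)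
qed

section \<open>An edge criterion\<close>

lemma sum_eq_1_imp_positive_term:
  fixes q :: "nat \<Rightarrow> real"
  assumes "(\<Sum>j<N. q j) = 1"
  obtains j where "j < N" and "0 < q j"
proof -
  have "\<not> (\<forall>j<N. q j \<le> 0)"
    using sum_nonpos[of "{..<N}" q] assms by auto
  then show ?thesis using that by force
qed

lemma bits_positive_outcome:
  fixes p :: "nat \<Rightarrow> real"
  assumes "p 0 + p 1 = 1"
  obtains a where "a \<in> bits" and "0 < p a"
  using assms that by (cases "0 < p 0") (auto, smt (verit))

text \<open>An LHS part of weight \<open>\<epsilon> > 0\<close> puts some hidden state with positive weight into both
  \<open>\<sigma>(a b0|0 0)\<close> and \<open>\<sigma>(a b1|0 1)\<close>, so that state vanishes wherever these do.\<close>
lemma LHS_mixture_obtains_dominated_state: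
  assumes eps: "0 < \<epsilon>" "\<epsilon> \<le> 1" and lhs: "LHS d S1" and S2: "no_signaling d S2"
    and mix: "\<forall>a\<in>bits. \<forall>b\<in>bits. \<forall>x\<in>bits. \<forall>y\<in>bits.
      S a b x y = complex_of_real \<epsilon> \<cdot>\<^sub>m S1 a b x y + complex_of_real (1 - \<epsilon>) \<cdot>\<^sub>m S2 a b x y"
  obtains r a b0 b1 where "density d r" "a \<in> bits" "b0 \<in> bits" "b1 \<in> bits"
    "\<And>v. qform d (S a b0 0 0) v = 0 \<Longrightarrow> qform d r v = 0"
    "\<And>v. qform d (S a b1 0 1) v = 0 \<Longrightarrow> qform d r v = 0"
proof -
  obtain N :: nat and q :: "nat \<Rightarrow> real" and p p' :: "nat \<Rightarrow> nat \<Rightarrow> nat \<Rightarrow> real"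
    and r :: "nat \<Rightarrow> complex mat" where q: "\<forall>j<N. 0 \<le> q j" "(\<Sum>j<N. q j) = 1"
    and r: "\<forall>j<N. density d (r j)"
    and p_nonneg: "\<forall>j<N. \<forall>a\<in>bits. \<forall>x\<in>bits. 0 \<le> p j a x \<and> 0 \<le> p' j a x"
    and p_sum: "\<forall>j<N. \<forall>x\<in>bits. p j 0 x + p j 1 x = 1 \<and> p' j 0 x + p' j 1 x = 1"
    and S1: "\<forall>a\<in>bits. \<forall>b\<in>bits. \<forall>x\<in>bits. \<forall>y\<in>bits.
      S1 a b x y = mat d d (\<lambda>ij. \<Sum>j<N. complex_of_real (q j * p j a x * p' j b y) * r j $$ ij)"
    using lhs unfolding LHS_def by blast
  have r_psd: "psd d (r k)" if "k < N" for k using r that unfolding density_def by blast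
  have weight_nonneg: "0 \<le> q k * p k a x * p' k b y"
    if "k < N" "a \<in> bits" "b \<in> bits" "x \<in> bits" "y \<in> bits" for k a b x y
  proof -
    have "0 \<le> q k" "0 \<le> p k a x" "0 \<le> p' k b y" using q(1) p_nonneg that by blast+
    then show ?thesis by simp
  qed
  obtain j where j: "j < N" "0 < q j" using sum_eq_1_imp_positive_term[OF q(2)] .
  obtain a where a: "a \<in> bits" "0 < p j a 0"
    using bits_positive_outcome[of "\<lambda>a. p j a 0"] p_sum j by auto
  obtain b0 where b0: "b0 \<in> bits" "0 < p' j b0 0"
    using bits_positive_outcome[of "\<lambda>b. p' j b 0"] p_sum j by auto
  obtain b1 where b1: "b1 \<in> bits" "0 < p' j b1 1"
    using bits_positive_outcome[of "\<lambda>b. p' j b 1"] p_sum j by auto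
  have "qform d (r j) v = 0"
    if b: "b \<in> bits" and y: "y \<in> bits" and pb: "0 < p' j b y" and v: "qform d (S a b 0 y) v = 0" for b y v
  proof (rule qform_eq_0_mixture_component[OF eps _ _ r_psd _ j(1) _ v])
    have "S a b 0 y = complex_of_real \<epsilon> \<cdot>\<^sub>m S1 a b 0 y + complex_of_real (1 - \<epsilon>) \<cdot>\<^sub>m S2 a b 0 y"
      using mix a b y by blast
    moreover have "S1 a b 0 y =
        mat d d (\<lambda>ij. \<Sum>k<N. complex_of_real (q k * p k a 0 * p' k b y) * r k $$ ij)"
      using S1 a b y by blast
    ultimately show "S a b 0 y = complex_of_real \<epsilon> \<cdot>\<^sub>m
        mat d d (\<lambda>ij. \<Sum>k<N. complex_of_real (q k * p k a 0 * p' k b y) * r k $$ ij)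
        + complex_of_real (1 - \<epsilon>) \<cdot>\<^sub>m S2 a b 0 y" by simp
    show "psd d (S2 a b 0 y)" using S2 a b y unfolding no_signaling_def by blast
    show "0 < q j * p j a 0 * p' j b y" using j a pb by simp
  qed (use weight_nonneg a b y in auto)
  with r j a b0 b1 show thesis by (intro that[of "r j" a b0 b1]) auto
qed

text \<open>If \<open>\<Sigma>\<close> had an LHS part, one of its hidden states would be supported on the two independent
  lines spanned by \<open>\<chi> a b 0\<close> and \<open>\<chi> a b' 1\<close>, hence vanish.\<close>
lemma on_edge_if_rank_one_supports:
  fixes S :: assemblage and \<chi> :: "nat \<Rightarrow> nat \<Rightarrow> nat \<Rightarrow> nat \<Rightarrow> complex"
  assumes ns: "no_signaling d S"
    and support: "\<And>a b y v. a \<in> bits \<Longrightarrow> b \<in> bits \<Longrightarrow> y \<in> bits \<Longrightarrow>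
        cinner d (\<chi> a b y) v = 0 \<Longrightarrow> qform d (S a b 0 y) v = 0"
    and indep: "\<And>a b b'. a \<in> bits \<Longrightarrow> b \<in> bits \<Longrightarrow> b' \<in> bits \<Longrightarrow>
        lin_indep2 d (\<chi> a b 0) (\<chi> a b' 1)"
  shows "on_edge d S"
  unfolding on_edge_def
proof (intro conjI allI impI ns, elim conjE)
  fix \<epsilon> :: real and S1 S2
  assume eps: "0 \<le> \<epsilon>" "\<epsilon> \<le> 1" and lhs: "LHS d S1" and S2: "no_signaling d S2"
    and mix: "\<forall>a\<in>bits. \<forall>b\<in>bits. \<forall>x\<in>bits. \<forall>y\<in>bits.
      S a b x y = complex_of_real \<epsilon> \<cdot>\<^sub>m S1 a b x y + complex_of_real (1 - \<epsilon>) \<cdot>\<^sub>m S2 a b x y"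
  show "\<epsilon> = 0"
  proof (rule ccontr)
    assume "\<epsilon> \<noteq> 0"
    with eps have "0 < \<epsilon>" by simp
    then obtain r a b0 b1 where r: "density d r" and bits: "a \<in> bits" "b0 \<in> bits" "b1 \<in> bits"
      and below0: "\<And>v. qform d (S a b0 0 0) v = 0 \<Longrightarrow> qform d r v = 0"
      and below1: "\<And>v. qform d (S a b1 0 1) v = 0 \<Longrightarrow> qform d r v = 0"
      using LHS_mixture_obtains_dominated_state[OF _ eps(2) lhs S2 mix] by metis
    have r_psd: "psd d r" using r unfolding density_def by simp
    have "r $$ (i,i) = 0" if "i < d" for i
      by (rule psd_diag_eq_0_if_vanishes_on_two_hyperplanes[OF r_psd indep[OF bits] _ _ that])
        (use below0 below1 support bits in auto)
    then have "trace_mat r = 0" using psd_carrier[OF r_psd] unfolding trace_mat_def by simp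
    with r show False unfolding density_def by simp
  qed
qed

section \<open>Kronecker products and partial traces\<close>

lemma block_index_less: "k < m \<Longrightarrow> i < n \<Longrightarrow> k*n+i < m*(n::nat)"
  using mult_le_mono1[of "Suc k" m n] by simp

lemma sum_lessThan_mult: fixes h :: "nat \<Rightarrow> 'a::comm_monoid_add"
  shows "(\<Sum>l<m*n. h l) = (\<Sum>k<m. \<Sum>c<n. h (k*n+c))"
proof -
  have "(\<Sum>l<m*n. h l) = (\<Sum>k<m. sum h {k*n..<k*n+n})" by (rule sum.nat_group[symmetric])
  also have "\<dots> = (\<Sum>k<m. \<Sum>c<n. h (k*n+c))"
  proof (rule sum.cong[OF refl])
    fix k
    have "sum h {0+k*n..<n+k*n} = (\<Sum>c\<in>{0..<n}. h (c + k*n))" by (rule sum.shift_bounds_nat_ivl)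
    then show "sum h {k*n..<k*n+n} = (\<Sum>c<n. h (k*n+c))"
      by (simp add: add.commute lessThan_atLeast0)
  qed
  finally show ?thesis .
qed

lemma index_kron:
  assumes "i < dim_row A * dim_row B" "j < dim_col A * dim_col B"
  shows "kron A B $$ (i,j) = A $$ (i div dim_row B, j div dim_col B) * B $$ (i mod dim_row B, j mod dim_col B)"
  using assms unfolding kron_def by simp

lemma dim_kron[simp]: "dim_row (kron A B) = dim_row A * dim_row B" "dim_col (kron A B) = dim_col A * dim_col B"
  unfolding kron_def by simp_all

lemma dim_ptrace_fst[simp]: "dim_row (ptrace_fst m n X) = n" "dim_col (ptrace_fst m n X) = n"
  "ptrace_fst m n X \<in> carrier_mat n n"
  unfolding ptrace_fst_def by simp_all

lemma index_ptrace_fst: "i < n \<Longrightarrow> j < n \<Longrightarrow> ptrace_fst m n X $$ (i,j) = (\<Sum>k<m. X $$ (k*n+i, k*n+j))"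
  unfolding ptrace_fst_def by simp

lemma index_kron_one_mult:
  assumes T: "T \<in> carrier_mat m m" and X: "X \<in> carrier_mat (m*n) c"
    and k: "k < m" and i: "i < n" and j: "j < c"
  shows "(kron T (1\<^sub>m n) * X) $$ (k*n+i, j) = (\<Sum>k'<m. T $$ (k,k') * X $$ (k'*n+i, j))"
proof -
  have "(kron T (1\<^sub>m n) * X) $$ (k*n+i, j) = (\<Sum>l<m*n. kron T (1\<^sub>m n) $$ (k*n+i, l) * X $$ (l, j))"
    using block_index_less[OF k i] T X j by (simp add: scalar_prod_def lessThan_atLeast0)
  also have "\<dots> = (\<Sum>k'<m. \<Sum>c<n. kron T (1\<^sub>m n) $$ (k*n+i, k'*n+c) * X $$ (k'*n+c, j))"
    by (rule sum_lessThan_mult)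
  also have "\<dots> = (\<Sum>k'<m. \<Sum>c<n. if c = i then T $$ (k,k') * X $$ (k'*n+i, j) else 0)"
    using T k i by (intro sum.cong refl) (auto simp: index_kron block_index_less)
  finally show ?thesis using i by simp
qed

lemma index_ptrace_fst_kron_one:
  assumes T: "T \<in> carrier_mat m m" and X: "X \<in> carrier_mat (m*n) (m*n)" and i: "i < n" and j: "j < n"
  shows "ptrace_fst m n (kron T (1\<^sub>m n) * X) $$ (i,j) = (\<Sum>k<m. \<Sum>k'<m. T $$ (k,k') * X $$ (k'*n+i, k*n+j))"
  unfolding index_ptrace_fst[OF i j]
  using index_kron_one_mult[OF T X _ i] block_index_less[OF _ j] by (intro sum.cong) auto

lemma kron_carrier: "A \<in> carrier_mat m n \<Longrightarrow> B \<in> carrier_mat p q \<Longrightarrow> kron A B \<in> carrier_mat (m*p) (n*q)"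
  by (intro carrier_matI) (simp_all only: dim_kron carrier_matD)

lemma kron_add_left:
  assumes "A \<in> carrier_mat m n" "A' \<in> carrier_mat m n"
  shows "kron (A + A') B = kron A B + kron A' B"
proof (rule eq_matI)
  fix i j assume "i < dim_row (kron A B + kron A' B)" "j < dim_col (kron A B + kron A' B)"
  with assms have "i < m * dim_row B" "j < n * dim_col B" by simp_all
  with assms show "kron (A + A') B $$ (i,j) = (kron A B + kron A' B) $$ (i,j)"
    by (simp add: index_kron less_mult_imp_div_less algebra_simps)
qed (use assms in simp_all)

lemma kron_add_right:
  assumes "B \<in> carrier_mat p q" "B' \<in> carrier_mat p q"
  shows "kron A (B + B') = kron A B + kron A B'"
proof (rule eq_matI)
  fix i j assume "i < dim_row (kron A B + kron A B')" "j < dim_col (kron A B + kron A B')"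
  with assms have "i < dim_row A * p" "j < dim_col A * q" by simp_all
  moreover from this have "0 < p" "0 < q" by (auto intro: ccontr)
  ultimately show "kron A (B + B') $$ (i,j) = (kron A B + kron A B') $$ (i,j)"
    using assms by (simp add: index_kron algebra_simps)
qed (use assms in simp_all)

lemma ptrace_fst_add:
  assumes "X \<in> carrier_mat (m*n) (m*n)" "Y \<in> carrier_mat (m*n) (m*n)"
  shows "ptrace_fst m n (X + Y) = ptrace_fst m n X + ptrace_fst m n Y"
proof (rule eq_matI)
  fix i j assume "i < dim_row (ptrace_fst m n X + ptrace_fst m n Y)"
    "j < dim_col (ptrace_fst m n X + ptrace_fst m n Y)"
  then have ij: "i < n" "j < n" by simp_all
  then have "ptrace_fst m n (X + Y) $$ (i,j) = (\<Sum>k<m. X $$ (k*n+i, k*n+j) + Y $$ (k*n+i, k*n+j))"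
    using assms by (auto simp: index_ptrace_fst block_index_less intro!: sum.cong)
  also have "\<dots> = (ptrace_fst m n X + ptrace_fst m n Y) $$ (i,j)"
    using ij by (simp add: index_ptrace_fst sum.distrib)
  finally show "ptrace_fst m n (X + Y) $$ (i,j) = (ptrace_fst m n X + ptrace_fst m n Y) $$ (i,j)" .
qed simp_all

lemma trace_ptrace_fst:
  assumes "X \<in> carrier_mat (m*n) (m*n)"
  shows "trace_mat (ptrace_fst m n X) = trace_mat X"
proof -
  have "trace_mat (ptrace_fst m n X) = (\<Sum>i<n. \<Sum>k<m. X $$ (k*n+i, k*n+i))"
    unfolding trace_mat_def by (simp add: index_ptrace_fst)
  also have "\<dots> = (\<Sum>l<m*n. X $$ (l,l))"
    unfolding sum_lessThan_mult by (rule sum.swap)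
  finally show ?thesis using assms unfolding trace_mat_def by simp
qed

lemma kron_one_one: "kron (1\<^sub>m m) (1\<^sub>m n) = 1\<^sub>m (m*n)"
proof (rule eq_matI)
  fix i j assume ij: "i < dim_row (1\<^sub>m (m*n))" "j < dim_col (1\<^sub>m (m*n))"
  then have "i div n < m" "j div n < m" "0 < n"
    by (simp_all add: less_mult_imp_div_less) (auto intro: ccontr)
  moreover have "(i div n = j div n \<and> i mod n = j mod n) = (i = j)"
    by (metis div_mult_mod_eq)
  ultimately show "kron (1\<^sub>m m) (1\<^sub>m n) $$ (i,j) = 1\<^sub>m (m*n) $$ (i,j)"
    using ij by (auto simp: index_kron)
qed simp_all

lemma div_mod_mult_right: "0 < (c::nat) \<Longrightarrow> i mod (b*c) div c = i div c mod b"
  by (simp add: mult.commute[of b c] mod_mult2_eq)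

lemma mod_mod_mult_right: "(i::nat) mod (b*c) mod c = i mod c"
  by (simp add: mult.commute[of b c] mod_mult2_eq)

lemma kron_assoc: "kron (kron A B) C = kron A (kron B C)"
proof (rule eq_matI)
  fix i j assume "i < dim_row (kron A (kron B C))" "j < dim_col (kron A (kron B C))"
  then have i: "i < dim_row A * dim_row B * dim_row C" and j: "j < dim_col A * dim_col B * dim_col C"
    by (simp_all add: mult.assoc)
  then have "0 < dim_row B" "0 < dim_row C" "0 < dim_col B" "0 < dim_col C"
    by (auto intro: ccontr)
  moreover have "i div dim_row B div dim_row C = i div dim_row C div dim_row B"
    "j div dim_col B div dim_col C = j div dim_col C div dim_col B"
    by (metis div_mult2_eq mult.commute)+
  ultimately show "kron (kron A B) C $$ (i,j) = kron A (kron B C) $$ (i,j)" using i j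
    by (simp add: index_kron less_mult_imp_div_less div_mult2_eq div_mod_mult_right mod_mod_mult_right
        mult.assoc mult.commute[of "dim_row C"] mult.commute[of "dim_col C"])
qed (simp_all add: mult.assoc)
lemma index_ptrace_fst_kron_kron_one:
  assumes M: "M \<in> carrier_mat 2 2"
    and R: "R \<in> carrier_mat (2*2*d) (2*2*d)" and i: "i < 2*d" and j: "j < 2*d"
  shows "ptrace_fst 2 (2*d) (kron (kron M (1\<^sub>m 2)) (1\<^sub>m d) * R) $$ (i,j) =
    (\<Sum>\<alpha><2. \<Sum>\<alpha>'<2. M $$ (\<alpha>,\<alpha>') * R $$ (\<alpha>'*(2*d)+i, \<alpha>*(2*d)+j))"
proof -
  have R': "R \<in> carrier_mat (2*(2*d)) (2*(2*d))" using R by (simp add: mult.assoc)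
  show ?thesis unfolding kron_assoc kron_one_one by (rule index_ptrace_fst_kron_one[OF M R' i j])
qed

lemma ptrace_fst_add_mult:
  assumes "K \<in> carrier_mat (m*n) (m*n)" "K' \<in> carrier_mat (m*n) (m*n)" "X \<in> carrier_mat (m*n) (m*n)"
  shows "ptrace_fst m n ((K + K') * X) = ptrace_fst m n (K * X) + ptrace_fst m n (K' * X)"
  unfolding add_mult_distrib_mat[OF assms] by (rule ptrace_fst_add) (use assms in auto)

lemma index_kron2:
  assumes "M \<in> carrier_mat 2 2" "Q \<in> carrier_mat 2 2" "\<alpha> < 2" "\<beta> < 2" "\<alpha>' < 2" "\<beta>' < 2"
  shows "kron M Q $$ (\<alpha>*2+\<beta>, \<alpha>'*2+\<beta>') = M $$ (\<alpha>,\<alpha>') * Q $$ (\<beta>,\<beta>')"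
  using assms block_index_less[of \<alpha> 2 \<beta> 2] block_index_less[of \<alpha>' 2 \<beta>' 2] by (simp add: index_kron)

lemma sum_kron2:
  assumes M: "M \<in> carrier_mat 2 2" and Q: "Q \<in> carrier_mat 2 2"
  shows "(\<Sum>k<2*2. \<Sum>k'<2*2. kron M Q $$ (k,k') * f k' k) = (\<Sum>\<alpha><2. \<Sum>\<beta><2. \<Sum>\<alpha>'<2. \<Sum>\<beta>'<2.
    M $$ (\<alpha>,\<alpha>') * Q $$ (\<beta>,\<beta>') * f (\<alpha>'*2+\<beta>') (\<alpha>*2+\<beta>))"
proof -
  have "(\<Sum>k<2*2. \<Sum>k'<2*2. kron M Q $$ (k,k') * f k' k) = (\<Sum>\<alpha><2. \<Sum>\<beta><2. \<Sum>\<alpha>'<2. \<Sum>\<beta>'<2.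
      kron M Q $$ (\<alpha>*2+\<beta>,\<alpha>'*2+\<beta>') * f (\<alpha>'*2+\<beta>') (\<alpha>*2+\<beta>))"
    by (simp only: sum_lessThan_mult)
  then show ?thesis by (simp add: index_kron2[OF M Q])
qed

section \<open>Steered states\<close>

definition steered :: "nat \<Rightarrow> complex mat \<Rightarrow> complex mat \<Rightarrow> complex mat \<Rightarrow> complex mat" where
  "steered d \<rho> A B = ptrace_fst (2*2) d (kron (kron A B) (1\<^sub>m d) * \<rho>)"

lemma steered_carrier: "steered d \<rho> A B \<in> carrier_mat d d"
  unfolding steered_def by simp

lemma kron_kron_one_carrier:
  "A \<in> carrier_mat 2 2 \<Longrightarrow> B \<in> carrier_mat 2 2 \<Longrightarrow> kron (kron A B) (1\<^sub>m d) \<in> carrier_mat (2*2*d) (2*2*d)"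
  by (intro kron_carrier) auto

lemma steered_add_left:
  assumes A: "A \<in> carrier_mat 2 2" "A' \<in> carrier_mat 2 2" and B: "B \<in> carrier_mat 2 2"
    and \<rho>: "\<rho> \<in> carrier_mat (2*2*d) (2*2*d)"
  shows "steered d \<rho> (A + A') B = steered d \<rho> A B + steered d \<rho> A' B"
  unfolding steered_def kron_add_left[OF A]
    kron_add_left[OF kron_carrier[OF A(1) B] kron_carrier[OF A(2) B]]
  by (rule ptrace_fst_add_mult[OF kron_kron_one_carrier[OF A(1) B] kron_kron_one_carrier[OF A(2) B] \<rho>])

lemma steered_add_right:
  assumes A: "A \<in> carrier_mat 2 2" and B: "B \<in> carrier_mat 2 2" "B' \<in> carrier_mat 2 2"
    and \<rho>: "\<rho> \<in> carrier_mat (2*2*d) (2*2*d)"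
  shows "steered d \<rho> A (B + B') = steered d \<rho> A B + steered d \<rho> A B'"
  unfolding steered_def kron_add_right[OF B]
    kron_add_left[OF kron_carrier[OF A B(1)] kron_carrier[OF A B(2)]]
  by (rule ptrace_fst_add_mult[OF kron_kron_one_carrier[OF A B(1)] kron_kron_one_carrier[OF A B(2)] \<rho>])

lemma trace_steered_one:
  assumes "\<rho> \<in> carrier_mat (2*2*d) (2*2*d)"
  shows "trace_mat (steered d \<rho> (1\<^sub>m 2) (1\<^sub>m 2)) = trace_mat \<rho>"
  using assms unfolding steered_def kron_one_one by (simp add: trace_ptrace_fst)

lemma steered_marginal_left:
  assumes "A0 \<in> carrier_mat 2 2" "A1 \<in> carrier_mat 2 2" "A0 + A1 = 1\<^sub>m 2" "B \<in> carrier_mat 2 2"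
    and "\<rho> \<in> carrier_mat (2*2*d) (2*2*d)"
  shows "steered d \<rho> A0 B + steered d \<rho> A1 B = steered d \<rho> (1\<^sub>m 2) B"
  using steered_add_left[of A0 A1 B \<rho> d] assms by simp

lemma steered_marginal_right:
  assumes "A \<in> carrier_mat 2 2" "B0 \<in> carrier_mat 2 2" "B1 \<in> carrier_mat 2 2" "B0 + B1 = 1\<^sub>m 2"
    and "\<rho> \<in> carrier_mat (2*2*d) (2*2*d)"
  shows "steered d \<rho> A B0 + steered d \<rho> A B1 = steered d \<rho> A (1\<^sub>m 2)"
  using steered_add_right[of A B0 B1 \<rho> d] assms by simp

lemma steered_total:
  assumes A: "A0 \<in> carrier_mat 2 2" "A1 \<in> carrier_mat 2 2" "A0 + A1 = 1\<^sub>m 2"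
    and B: "B0 \<in> carrier_mat 2 2" "B1 \<in> carrier_mat 2 2" "B0 + B1 = 1\<^sub>m 2"
    and \<rho>: "\<rho> \<in> carrier_mat (2*2*d) (2*2*d)"
  shows "steered d \<rho> A0 B0 + steered d \<rho> A0 B1 + steered d \<rho> A1 B0 + steered d \<rho> A1 B1
    = steered d \<rho> (1\<^sub>m 2) (1\<^sub>m 2)"
proof -
  have "steered d \<rho> A0 B0 + steered d \<rho> A0 B1 + steered d \<rho> A1 B0 + steered d \<rho> A1 B1
      = (steered d \<rho> A0 B0 + steered d \<rho> A0 B1) + (steered d \<rho> A1 B0 + steered d \<rho> A1 B1)"
    by (rule assoc_add_mat[of _ d d]) (simp_all add: steered_carrier)
  also have "\<dots> = steered d \<rho> A0 (1\<^sub>m 2) + steered d \<rho> A1 (1\<^sub>m 2)"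
    using steered_marginal_right[OF _ B \<rho>] A by simp
  also have "\<dots> = steered d \<rho> (1\<^sub>m 2) (1\<^sub>m 2)"
    by (rule steered_marginal_left[OF A one_carrier_mat \<rho>])
  finally show ?thesis .
qed

lemma index_steered:
  assumes M: "M \<in> carrier_mat 2 2" and Q: "Q \<in> carrier_mat 2 2"
    and \<rho>: "\<rho> \<in> carrier_mat (2*2*d) (2*2*d)" and ij: "i < d" "j < d"
  shows "steered d \<rho> M Q $$ (i,j) = (\<Sum>\<alpha><2. \<Sum>\<beta><2. \<Sum>\<alpha>'<2. \<Sum>\<beta>'<2.
    M $$ (\<alpha>,\<alpha>') * Q $$ (\<beta>,\<beta>') * \<rho> $$ (\<alpha>'*(2*d) + (\<beta>'*d+i), \<alpha>*(2*d) + (\<beta>*d+j)))"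
proof -
  have "kron M Q \<in> carrier_mat (2*2) (2*2)" using M Q by (rule kron_carrier)
  then have "steered d \<rho> M Q $$ (i,j) = (\<Sum>k<2*2. \<Sum>k'<2*2. kron M Q $$ (k,k') * \<rho> $$ (k'*d+i, k*d+j))"
    unfolding steered_def using \<rho> ij by (rule index_ptrace_fst_kron_one)
  also have "\<dots> = (\<Sum>\<alpha><2. \<Sum>\<beta><2. \<Sum>\<alpha>'<2. \<Sum>\<beta>'<2.
      M $$ (\<alpha>,\<alpha>') * Q $$ (\<beta>,\<beta>') * \<rho> $$ ((\<alpha>'*2+\<beta>')*d+i, (\<alpha>*2+\<beta>)*d+j))"
    by (rule sum_kron2[OF M Q])
  finally show ?thesis by (simp add: algebra_simps)
qed

lemma qform_congruence:
  assumes B: "\<And>a' a. a' < m \<Longrightarrow> a < m \<Longrightarrow> B $$ (a',a) = (\<Sum>l<N. \<Sum>l'<N. cnj (V l a') * A $$ (l,l') * V l' a)"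
  shows "qform m B g = qform N A (\<lambda>l. \<Sum>a<m. V l a * g a)"
proof -
  have "qform m B g = (\<Sum>a'<m. \<Sum>a<m. \<Sum>l<N. \<Sum>l'<N. cnj (g a') * cnj (V l a') * A $$ (l,l') * V l' a * g a)"
    unfolding qform_def by (simp add: B sum_distrib_left sum_distrib_right mult.assoc)
  also have "\<dots> = (\<Sum>a'<m. \<Sum>l<N. \<Sum>a<m. \<Sum>l'<N. cnj (g a') * cnj (V l a') * A $$ (l,l') * V l' a * g a)"
    by (rule sum.cong[OF refl], rule sum.swap)
  also have "\<dots> = (\<Sum>l<N. \<Sum>a'<m. \<Sum>a<m. \<Sum>l'<N. cnj (g a') * cnj (V l a') * A $$ (l,l') * V l' a * g a)"
    by (rule sum.swap)
  also have "\<dots> = (\<Sum>l<N. \<Sum>a'<m. \<Sum>l'<N. \<Sum>a<m. cnj (g a') * cnj (V l a') * A $$ (l,l') * V l' a * g a)"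
    by (rule sum.cong[OF refl], rule sum.cong[OF refl], rule sum.swap)
  also have "\<dots> = (\<Sum>l<N. \<Sum>l'<N. \<Sum>a'<m. \<Sum>a<m. cnj (g a') * cnj (V l a') * A $$ (l,l') * V l' a * g a)"
    by (rule sum.cong[OF refl], rule sum.swap)
  also have "\<dots> = qform N A (\<lambda>l. \<Sum>a<m. V l a * g a)"
    unfolding qform_def
    by (simp add: sum_distrib_left sum_distrib_right mult.assoc mult.commute mult.left_commute)
  finally show ?thesis .
qed

lemma psd_congruence:
  assumes A: "psd N A" and B: "B \<in> carrier_mat m m"
    and B_eq: "\<And>a' a. a' < m \<Longrightarrow> a < m \<Longrightarrow> B $$ (a',a) = (\<Sum>l<N. \<Sum>l'<N. cnj (V l a') * A $$ (l,l') * V l' a)"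
  shows "psd m B"
proof (rule psd_qformI)
  show "hermitian m B" unfolding hermitian_iff_entries
  proof (intro conjI allI impI B)
    fix a' a assume a: "a' < m" "a < m"
    have "cnj (A $$ (l,l')) = A $$ (l',l)" if "l < N" "l' < N" for l l'
      using hermitian_entry[OF psd_hermitian[OF A] that(2,1)] by simp
    then have "cnj (B $$ (a,a')) = (\<Sum>l<N. \<Sum>l'<N. V l a * A $$ (l',l) * cnj (V l' a'))"
      using a by (simp add: B_eq)
    also have "\<dots> = (\<Sum>l'<N. \<Sum>l<N. V l a * A $$ (l',l) * cnj (V l' a'))" by (rule sum.swap)
    also have "\<dots> = B $$ (a',a)" using a by (simp add: B_eq mult.commute mult.left_commute)
    finally show "B $$ (a',a) = cnj (B $$ (a,a'))" by simp
  qed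
  fix g
  have "qform m B g = qform N A (\<lambda>l. \<Sum>a<m. V l a * g a)" by (rule qform_congruence[OF B_eq])
  then show "Im (qform m B g) = 0 \<and> 0 \<le> Re (qform m B g)" using psd_qformD[OF A] by simp
qed

lemma sum_block_select:
  fixes h :: "nat \<Rightarrow> 'a::comm_monoid_add"
  assumes k: "k < m"
  shows "(\<Sum>l<m*n. if l div n = k then h l else 0) = (\<Sum>i<n. h (k*n+i))"
proof (cases "n = 0")
  case True then show ?thesis by simp
next
  case False
  have "(\<Sum>l<m*n. if l div n = k then h l else 0) = (\<Sum>k1<m. \<Sum>i<n. if (k1*n+i) div n = k then h (k1*n+i) else 0)"
    by (rule sum_lessThan_mult)
  also have "\<dots> = (\<Sum>k1<m. if k1 = k then (\<Sum>i<n. h (k1*n+i)) else 0)"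
  proof (intro sum.cong refl)
    fix k1 assume "k1 \<in> {..<m}"
    have "\<And>i. i \<in> {..<n} \<Longrightarrow> (k1*n+i) div n = k1" using False by simp
    then show "(\<Sum>i<n. if (k1*n+i) div n = k then h (k1*n+i) else 0) = (if k1 = k then (\<Sum>i<n. h (k1*n+i)) else 0)"
      by (auto intro!: sum.neutral)
  qed
  also have "\<dots> = (\<Sum>i<n. h (k*n+i))" using k by (simp add: sum.delta)
  finally show ?thesis .
qed

text \<open>\<open>(1 \<otimes> \<langle>v|) X (1 \<otimes> |v\<rangle>)\<close>: the \<open>d \<times> d\<close> blocks of the \<open>m d \<times> m d\<close> matrix \<open>X\<close>,
  each compressed by \<open>v\<close>.\<close>
definition block_compress :: "nat \<Rightarrow> nat \<Rightarrow> complex mat \<Rightarrow> (nat \<Rightarrow> complex) \<Rightarrow> complex mat" where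
  "block_compress m d X v = mat m m (\<lambda>(k',k). \<Sum>i<d. \<Sum>j<d. cnj (v i) * X $$ (k'*d+i, k*d+j) * v j)"

lemma psd_block_compress:
  assumes X: "psd (m*d) X"
  shows "psd m (block_compress m d X v)"
proof (rule psd_congruence[OF X, where V = "\<lambda>l k. if l div d = k then v (l mod d) else 0"])
  show "block_compress m d X v \<in> carrier_mat m m" unfolding block_compress_def by simp
  fix a' a assume a: "a' < m" "a < m"
  let ?F = "\<lambda>l l'. cnj (v (l mod d)) * X $$ (l,l') * v (l' mod d)"
  have "(\<Sum>l<m*d. \<Sum>l'<m*d. cnj (if l div d = a' then v (l mod d) else 0) * X $$ (l,l')
          * (if l' div d = a then v (l' mod d) else 0))
      = (\<Sum>l<m*d. if l div d = a' then (\<Sum>l'<m*d. if l' div d = a then ?F l l' else 0) else 0)"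
    by (intro sum.cong refl) (auto simp: if_distrib cong: if_cong)
  also have "\<dots> = (\<Sum>i<d. \<Sum>l'<m*d. if l' div d = a then ?F (a'*d+i) l' else 0)"
    by (rule sum_block_select[OF a(1)])
  also have "\<dots> = (\<Sum>i<d. \<Sum>j<d. ?F (a'*d+i) (a*d+j))"
    by (intro sum.cong refl sum_block_select[OF a(2)])
  also have "\<dots> = block_compress m d X v $$ (a',a)"
    unfolding block_compress_def using a by simp
  finally show "block_compress m d X v $$ (a',a) = (\<Sum>l<m*d. \<Sum>l'<m*d.
      cnj (if l div d = a' then v (l mod d) else 0) * X $$ (l,l') * (if l' div d = a then v (l' mod d) else 0))"
    by simp
qed

lemma qform_ptrace_fst_kron_one:
  assumes T: "T \<in> carrier_mat m m" and X: "X \<in> carrier_mat (m*d) (m*d)"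
  shows "qform d (ptrace_fst m d (kron T (1\<^sub>m d) * X)) v = (\<Sum>k<m. \<Sum>k'<m. T $$ (k,k') * block_compress m d X v $$ (k',k))"
proof -
  have "qform d (ptrace_fst m d (kron T (1\<^sub>m d) * X)) v =
      (\<Sum>i<d. \<Sum>j<d. cnj (v i) * (\<Sum>k<m. \<Sum>k'<m. T $$ (k,k') * X $$ (k'*d+i, k*d+j)) * v j)"
    unfolding qform_def by (intro sum.cong refl) (simp add: index_ptrace_fst_kron_one[OF T X])
  also have "\<dots> = (\<Sum>i<d. \<Sum>j<d. \<Sum>k<m. \<Sum>k'<m. T $$ (k,k') * (cnj (v i) * X $$ (k'*d+i, k*d+j) * v j))"
    by (simp add: sum_distrib_left sum_distrib_right mult.commute mult.left_commute)
  also have "\<dots> = (\<Sum>i<d. \<Sum>k<m. \<Sum>j<d. \<Sum>k'<m. T $$ (k,k') * (cnj (v i) * X $$ (k'*d+i, k*d+j) * v j))"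
    by (rule sum.cong[OF refl], rule sum.swap)
  also have "\<dots> = (\<Sum>k<m. \<Sum>i<d. \<Sum>j<d. \<Sum>k'<m. T $$ (k,k') * (cnj (v i) * X $$ (k'*d+i, k*d+j) * v j))"
    by (rule sum.swap)
  also have "\<dots> = (\<Sum>k<m. \<Sum>i<d. \<Sum>k'<m. \<Sum>j<d. T $$ (k,k') * (cnj (v i) * X $$ (k'*d+i, k*d+j) * v j))"
    by (rule sum.cong[OF refl], rule sum.cong[OF refl], rule sum.swap)
  also have "\<dots> = (\<Sum>k<m. \<Sum>k'<m. \<Sum>i<d. \<Sum>j<d. T $$ (k,k') * (cnj (v i) * X $$ (k'*d+i, k*d+j) * v j))"
    by (rule sum.cong[OF refl], rule sum.swap)
  also have "\<dots> = (\<Sum>k<m. \<Sum>k'<m. T $$ (k,k') * block_compress m d X v $$ (k',k))"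
    unfolding block_compress_def by (intro sum.cong refl) (simp add: sum_distrib_left)
  finally show ?thesis .
qed

lemma qform_2: "qform 2 M g = cnj (g 0) * M $$ (0,0) * g 0 + cnj (g 0) * M $$ (0,1) * g 1
    + cnj (g 1) * M $$ (1,0) * g 0 + cnj (g 1) * M $$ (1,1) * g 1"
  unfolding qform_def by (simp add: numeral_2_eq_2 lessThan_Suc)

lemma le_mult_if_quadratic_nonneg:
  fixes a b Z :: real
  assumes a: "a \<ge> 0" and b: "b \<ge> 0" and Z: "Z \<ge> 0" and h: "\<And>s. 0 \<le> a*Z + b*s\<^sup>2 - 2*s*Z"
  shows "Z \<le> a*b"
proof (cases "a > 0")
  case True
  have "0 \<le> a*Z + b*a\<^sup>2 - 2*a*Z" using h[of a] .
  then have "0 \<le> a*(a*b - Z)" by (simp add: algebra_simps power2_eq_square)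
  then show ?thesis using True by (simp add: zero_le_mult_iff)
next
  case False
  then have a0: "a = 0" using a by simp
  show ?thesis
  proof (rule ccontr)
    assume "\<not> Z \<le> a*b"
    then have Zp: "Z > 0" using a0 by simp
    define s where "s = Z/(b+1)"
    have bp: "b + 1 > 0" using b by simp
    have "0 \<le> b*s\<^sup>2 - 2*s*Z" using h[of s] a0 by simp
    also have "b*s\<^sup>2 - 2*s*Z = s*(b*s - 2*Z)" by (simp add: algebra_simps power2_eq_square)
    finally have "0 \<le> s*(b*s - 2*Z)" .
    moreover have "s > 0" unfolding s_def using Zp bp by simp
    ultimately have "0 \<le> b*s - 2*Z" by (simp add: zero_le_mult_iff)
    moreover have "b*s \<le> Z" unfolding s_def using bp b Zp by (simp add: field_simps)
    ultimately show False using Zp by linarith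
  qed
qed

lemma psd2_entries:
  assumes p: "psd 2 M"
  shows "M $$ (0,0) = complex_of_real (Re (M $$ (0,0)))" "Re (M $$ (0,0)) \<ge> 0"
        "M $$ (1,1) = complex_of_real (Re (M $$ (1,1)))" "Re (M $$ (1,1)) \<ge> 0"
        "M $$ (1,0) = cnj (M $$ (0,1))"
        "(cmod (M $$ (0,1)))\<^sup>2 \<le> Re (M $$ (0,0)) * Re (M $$ (1,1))"
proof -
  have q0: "qform 2 M (\<lambda>k. if k = 0 then 1 else 0) = M $$ (0,0)" by (simp add: qform_2)
  have q1: "qform 2 M (\<lambda>k. if k = 1 then 1 else 0) = M $$ (1,1)" by (simp add: qform_2)
  from psd_qformD[OF p, of "\<lambda>k. if k = 0 then 1 else 0"] q0
  show A: "M $$ (0,0) = complex_of_real (Re (M $$ (0,0)))" "Re (M $$ (0,0)) \<ge> 0"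
    by (simp_all add: complex_eq_iff)
  from psd_qformD[OF p, of "\<lambda>k. if k = 1 then 1 else 0"] q1
  show B: "M $$ (1,1) = complex_of_real (Re (M $$ (1,1)))" "Re (M $$ (1,1)) \<ge> 0"
    by (simp_all add: complex_eq_iff)
  show C: "M $$ (1,0) = cnj (M $$ (0,1))" using hermitian_entry[OF psd_hermitian[OF p], of 1 0] by simp
  define z where "z = M $$ (0,1)"
  define a where "a = Re (M $$ (0,0))"
  define b where "b = Re (M $$ (1,1))"
  have "0 \<le> a*(cmod z)\<^sup>2 + b*s\<^sup>2 - 2*s*(cmod z)\<^sup>2" for s
  proof -
    let ?g = "\<lambda>k::nat. if k = 0 then -z else complex_of_real s"
    have "qform 2 M ?g = cnj (-z) * complex_of_real a * (-z) + cnj (-z) * z * complex_of_real s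
        + complex_of_real s * cnj z * (-z) + complex_of_real s * complex_of_real b * complex_of_real s"
      unfolding qform_2 using A B C unfolding a_def b_def z_def by simp
    also have "\<dots> = complex_of_real a * (cnj z * z) - 2 * complex_of_real s * (cnj z * z) + complex_of_real (b*s\<^sup>2)"
      by (simp add: algebra_simps power2_eq_square)
    also have "\<dots> = complex_of_real (a*(cmod z)\<^sup>2 + b*s\<^sup>2 - 2*s*(cmod z)\<^sup>2)"
    proof -
      have zz: "cnj z * z = complex_of_real ((cmod z)\<^sup>2)" by (metis complex_norm_square mult.commute)
      show ?thesis unfolding zz by simp
    qed
    finally show ?thesis using psd_qformD[OF p, of ?g] by simp
  qed
  then show "(cmod (M $$ (0,1)))\<^sup>2 \<le> Re (M $$ (0,0)) * Re (M $$ (1,1))"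
    using le_mult_if_quadratic_nonneg[of a b "(cmod z)\<^sup>2"] A(2) B(2) unfolding a_def b_def z_def by simp
qed

lemma double_le_add_if_square_le_mult:
  fixes x y z :: real
  assumes "0 \<le> x" "0 \<le> y" "z\<^sup>2 \<le> x * y"
  shows "2 * z \<le> x + y"
proof (rule power2_le_imp_le)
  have "(x + y)\<^sup>2 - 4 * (x * y) = (x - y)\<^sup>2" by (simp add: power2_eq_square algebra_simps)
  moreover have "(2 * z)\<^sup>2 = 4 * z\<^sup>2" by (simp add: power2_eq_square)
  ultimately show "(2 * z)\<^sup>2 \<le> (x + y)\<^sup>2" using assms(3) zero_le_power2[of "x - y"] by linarith
qed (use assms in simp)

text \<open>With \<open>M = [a z; z\<^sup>* b]\<close> and \<open>R = [a' w; w\<^sup>* b']\<close> the trace is \<open>a a' + b b' + 2 Re (z w\<^sup>*)\<close>, and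
  \<open>|z w| \<le> sqrt (a a' b b') \<le> (a a' + b b') / 2\<close>.\<close>
lemma psd2_trace_mult_nonneg:
  assumes M: "psd 2 M" and R: "psd 2 R"
  shows "Im (\<Sum>a<2. \<Sum>a'<2. M $$ (a,a') * R $$ (a',a)) = 0 \<and> 0 \<le> Re (\<Sum>a<2. \<Sum>a'<2. M $$ (a,a') * R $$ (a',a))"
proof -
  note m = psd2_entries[OF M] and r = psd2_entries[OF R]
  define z w where "z = M $$ (0,1)" and "w = R $$ (0,1)"
  define a b ra rb where "a = Re (M $$ (0,0))" and "b = Re (M $$ (1,1))"
    and "ra = Re (R $$ (0,0))" and "rb = Re (R $$ (1,1))"
  have "(\<Sum>a<2. \<Sum>a'<2. M $$ (a,a') * R $$ (a',a))
      = M $$ (0,0) * R $$ (0,0) + M $$ (0,1) * R $$ (1,0) + M $$ (1,0) * R $$ (0,1) + M $$ (1,1) * R $$ (1,1)"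
    by (simp add: numeral_2_eq_2 lessThan_Suc)
  also have "\<dots> = complex_of_real a * complex_of_real ra + z * cnj w + cnj z * w
      + complex_of_real b * complex_of_real rb"
    unfolding a_def b_def ra_def rb_def z_def w_def using m(1,3,5) r(1,3,5) by metis
  also have "\<dots> = complex_of_real (a*ra + b*rb) + (z * cnj w + cnj (z * cnj w))"
    by (simp add: algebra_simps)
  finally have trace: "(\<Sum>a<2. \<Sum>a'<2. M $$ (a,a') * R $$ (a',a))
      = complex_of_real (a*ra + b*rb + 2 * Re (z * cnj w))"
    by (simp only: complex_add_cnj of_real_add)
  have "(cmod z)\<^sup>2 * (cmod w)\<^sup>2 \<le> (a*b) * (ra*rb)"
    using m(2,4,6) r(6) unfolding a_def b_def ra_def rb_def z_def w_def by (intro mult_mono) auto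
  then have "(cmod z * cmod w)\<^sup>2 \<le> (a*ra) * (b*rb)" by (simp add: power_mult_distrib algebra_simps)
  then have "2 * (cmod z * cmod w) \<le> a*ra + b*rb"
    using m(2,4) r(2,4) unfolding a_def b_def ra_def rb_def
    by (intro double_le_add_if_square_le_mult) simp_all
  moreover have "- (cmod z * cmod w) \<le> Re (z * cnj w)"
    using abs_Re_le_cmod[of "z * cnj w"] by (simp add: norm_mult)
  ultimately show ?thesis unfolding trace by simp
qed

lemma hermitian_ptrace_fst_kron_one:
  assumes T: "hermitian m T" and X: "hermitian (m*d) X"
  shows "hermitian d (ptrace_fst m d (kron T (1\<^sub>m d) * X))"
  unfolding hermitian_iff_entries
proof (intro conjI allI impI)
  show "ptrace_fst m d (kron T (1\<^sub>m d) * X) \<in> carrier_mat d d" by simp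
  note Tc = hermitian_carrier[OF T] and Xc = hermitian_carrier[OF X]
  fix i j assume i: "i < d" and j: "j < d"
  have "cnj (ptrace_fst m d (kron T (1\<^sub>m d) * X) $$ (j,i))
      = (\<Sum>k<m. \<Sum>k'<m. cnj (T $$ (k,k')) * cnj (X $$ (k'*d+j, k*d+i)))"
    by (simp add: index_ptrace_fst_kron_one[OF Tc Xc j i])
  also have "\<dots> = (\<Sum>k<m. \<Sum>k'<m. T $$ (k',k) * X $$ (k*d+i, k'*d+j))"
  proof (intro sum.cong refl)
    fix k k' assume "k \<in> {..<m}" "k' \<in> {..<m}"
    then show "cnj (T $$ (k,k')) * cnj (X $$ (k'*d+j, k*d+i)) = T $$ (k',k) * X $$ (k*d+i, k'*d+j)"
      using hermitian_entry[OF T, of k' k] hermitian_entry[OF X, of "k*d+i" "k'*d+j"] i j block_index_less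
      by simp
  qed
  also have "\<dots> = (\<Sum>k'<m. \<Sum>k<m. T $$ (k',k) * X $$ (k*d+i, k'*d+j))" by (rule sum.swap)
  also have "\<dots> = ptrace_fst m d (kron T (1\<^sub>m d) * X) $$ (i,j)"
    by (simp add: index_ptrace_fst_kron_one[OF Tc Xc i j])
  finally show "ptrace_fst m d (kron T (1\<^sub>m d) * X) $$ (i,j) = cnj (ptrace_fst m d (kron T (1\<^sub>m d) * X) $$ (j,i))"
    by simp
qed

lemma hermitian_kron:
  assumes M: "hermitian m M" and Q: "hermitian n Q"
  shows "hermitian (m*n) (kron M Q)"
  unfolding hermitian_iff_entries
proof (intro conjI allI impI)
  note Mc = hermitian_carrier[OF M] and Qc = hermitian_carrier[OF Q]
  show "kron M Q \<in> carrier_mat (m*n) (m*n)" by (rule kron_carrier[OF Mc Qc])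
  fix i j assume i: "i < m*n" and j: "j < m*n"
  then have "0 < n" by (cases n) auto
  with i j have ij: "i div n < m" "j div n < m" "i mod n < n" "j mod n < n"
    by (simp_all add: less_mult_imp_div_less)
  show "kron M Q $$ (i,j) = cnj (kron M Q $$ (j,i))"
    using i j Mc Qc hermitian_entry[OF M ij(1,2)] hermitian_entry[OF Q ij(3,4)] by (simp add: index_kron)
qed

definition real_rank_one2 :: "real \<Rightarrow> (nat \<Rightarrow> real) \<Rightarrow> complex mat" where
  "real_rank_one2 w q = mat 2 2 (\<lambda>(i,j). complex_of_real (w * q i * q j))"

lemma real_rank_one2_carrier: "real_rank_one2 w q \<in> carrier_mat 2 2"
  unfolding real_rank_one2_def by simp

lemma hermitian_real_rank_one2: "hermitian 2 (real_rank_one2 w q)"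
  unfolding hermitian_iff_entries real_rank_one2_def by (auto simp: mult.commute mult.left_commute)

lemma trace_kron_real_rank_one2_mult:
  assumes M: "M \<in> carrier_mat 2 2"
  shows "(\<Sum>k<2*2. \<Sum>k'<2*2. kron M (real_rank_one2 w q) $$ (k,k') * Y $$ (k',k))
    = complex_of_real w * (\<Sum>a<2. \<Sum>a'<2. M $$ (a,a') * block_compress 2 2 Y (\<lambda>k. complex_of_real (q k)) $$ (a',a))"
  unfolding sum_kron2[OF M real_rank_one2_carrier]
  by (simp add: numeral_2_eq_2 lessThan_Suc block_compress_def real_rank_one2_def algebra_simps)

text \<open>The form of the steered state at \<open>v\<close> is \<open>w tr (M Z)\<close>, where the psd \<open>2 \<times> 2\<close> matrix \<open>Z\<close> is
  \<open>\<rho>\<close> compressed by \<open>v\<close> on \<open>C\<close> and by \<open>q\<close> on \<open>B\<close>.\<close>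
lemma psd_steered_real_rank_one2:
  assumes M: "psd 2 M" and w: "w \<ge> 0" and \<rho>: "psd (2*2*d) \<rho>"
  shows "psd d (steered d \<rho> M (real_rank_one2 w q))"
proof (rule psd_qformI)
  let ?K = "kron M (real_rank_one2 w q)"
  have K: "hermitian (2*2) ?K"
    by (rule hermitian_kron[OF psd_hermitian[OF M] hermitian_real_rank_one2])
  show "hermitian d (steered d \<rho> M (real_rank_one2 w q))"
    unfolding steered_def by (rule hermitian_ptrace_fst_kron_one[OF K psd_hermitian[OF \<rho>]])
  fix v
  let ?Z = "block_compress 2 2 (block_compress (2*2) d \<rho> v) (\<lambda>k. complex_of_real (q k))"
  have "psd 2 ?Z" by (rule psd_block_compress) (use psd_block_compress[OF \<rho>] in simp)
  moreover have "qform d (steered d \<rho> M (real_rank_one2 w q)) v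
     = complex_of_real w * (\<Sum>a<2. \<Sum>a'<2. M $$ (a,a') * ?Z $$ (a',a))"
    unfolding steered_def qform_ptrace_fst_kron_one[OF hermitian_carrier[OF K] psd_carrier[OF \<rho>]]
    by (rule trace_kron_real_rank_one2_mult[OF psd_carrier[OF M]])
  ultimately show "Im (qform d (steered d \<rho> M (real_rank_one2 w q)) v) = 0 \<and>
      0 \<le> Re (qform d (steered d \<rho> M (real_rank_one2 w q)) v)"
    using psd2_trace_mult_nonneg[OF M] w by simp
qed

section \<open>Bob's measurements and no-signaling\<close>

text \<open>\<open>bob_vec b y\<close> is the unnormalised eigenvector of outcome \<open>b\<close> for setting \<open>y\<close>, of squared
  norm \<open>1 / bob_weight y\<close>.\<close>
definition bob_vec :: "nat \<Rightarrow> nat \<Rightarrow> nat \<Rightarrow> real" where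
  "bob_vec b y k = (if y = 0 then (if k = b then 1 else 0) else (if k = 0 \<or> b = 0 then 1 else -1))"

definition bob_weight :: "nat \<Rightarrow> real" where
  "bob_weight y = (if y = 0 then 1 else 1/2)"

definition bob_meas :: "nat \<Rightarrow> nat \<Rightarrow> complex mat" where
  "bob_meas b y = real_rank_one2 (bob_weight y) (bob_vec b y)"

lemma bob_meas_carrier: "bob_meas b y \<in> carrier_mat 2 2"
  unfolding bob_meas_def by (rule real_rank_one2_carrier)

lemma less_2_cases: "(i::nat) < 2 \<Longrightarrow> i = 0 \<or> i = 1"
  by auto

lemma projective2_bob_meas: "y \<in> bits \<Longrightarrow> projective2 2 (bob_meas 0 y) (bob_meas 1 y)"
  unfolding projective2_def
proof (intro conjI)
  show "hermitian 2 (bob_meas 0 y)" "hermitian 2 (bob_meas 1 y)"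
    unfolding bob_meas_def by (rule hermitian_real_rank_one2)+
  show "bob_meas 0 y * bob_meas 0 y = bob_meas 0 y" "bob_meas 1 y * bob_meas 1 y = bob_meas 1 y"
    "bob_meas 0 y + bob_meas 1 y = 1\<^sub>m 2" if "y \<in> bits"
    using that by (auto intro!: eq_matI dest!: less_2_cases simp: bob_meas_def real_rank_one2_def
        bob_vec_def bob_weight_def scalar_prod_def numeral_2_eq_2)
qed

lemma bob_vec_det:
  "b \<in> bits \<Longrightarrow> b' \<in> bits \<Longrightarrow> bob_vec b 0 0 * bob_vec b' 1 1 - bob_vec b 0 1 * bob_vec b' 1 0 \<noteq> 0"
  by (auto simp: bob_vec_def)

lemma no_signaling_steered_bob_meas:
  assumes \<rho>: "density (2*2*d) \<rho>" and M0: "povm2 2 (M 0 0) (M 1 0)" and M1: "povm2 2 (M 0 1) (M 1 1)"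
  shows "no_signaling d (\<lambda>a b x y. steered d \<rho> (M a x) (bob_meas b y))"
proof -
  have \<rho>_psd: "psd (2*2*d) \<rho>" using \<rho> unfolding density_def by simp
  note \<rho>_carrier = psd_carrier[OF \<rho>_psd]
  have M_psd: "psd 2 (M a x)" if "a \<in> bits" "x \<in> bits" for a x
    using that M0 M1 unfolding povm2_def by auto
  note M_carrier = psd_carrier[OF M_psd]
  have M_sum: "M 0 x + M 1 x = 1\<^sub>m 2" if "x \<in> bits" for x
    using that M0 M1 unfolding povm2_def by auto
  have Q_sum: "bob_meas 0 y + bob_meas 1 y = 1\<^sub>m 2" if "y \<in> bits" for y
    using projective2_bob_meas[OF that] unfolding projective2_def by simp
  note alice = steered_marginal_left[OF M_carrier M_carrier M_sum bob_meas_carrier \<rho>_carrier]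
  note bob = steered_marginal_right[OF M_carrier bob_meas_carrier bob_meas_carrier Q_sum \<rho>_carrier]
  show ?thesis
    unfolding no_signaling_def
  proof (intro conjI ballI exI[of _ "steered d \<rho> (1\<^sub>m 2) (1\<^sub>m 2)"])
    show "psd d (steered d \<rho> (M a x) (bob_meas b y))" if "a \<in> bits" "x \<in> bits" for a b x y
      unfolding bob_meas_def
      by (rule psd_steered_real_rank_one2[OF M_psd[OF that] _ \<rho>_psd]) (simp add: bob_weight_def)
    show "trace_mat (steered d \<rho> (1\<^sub>m 2) (1\<^sub>m 2)) = 1"
      using \<rho> unfolding trace_steered_one[OF \<rho>_carrier] density_def by simp
    show "steered d \<rho> (M 0 x) (bob_meas 0 y) + steered d \<rho> (M 0 x) (bob_meas 1 y)
      + steered d \<rho> (M 1 x) (bob_meas 0 y) + steered d \<rho> (M 1 x) (bob_meas 1 y)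
      = steered d \<rho> (1\<^sub>m 2) (1\<^sub>m 2)" if "x \<in> bits" "y \<in> bits" for x y
      using that by (intro steered_total M_carrier M_sum bob_meas_carrier Q_sum \<rho>_carrier) simp_all
    show "steered d \<rho> (M a x) (bob_meas 0 0) + steered d \<rho> (M a x) (bob_meas 1 0)
      = steered d \<rho> (M a x) (bob_meas 0 1) + steered d \<rho> (M a x) (bob_meas 1 1)"
      if "a \<in> bits" "x \<in> bits" for a x
      using bob[of a x 0] bob[of a x 1] that by simp
    show "steered d \<rho> (M 0 0) (bob_meas b y) + steered d \<rho> (M 1 0) (bob_meas b y)
      = steered d \<rho> (M 0 1) (bob_meas b y) + steered d \<rho> (M 1 1) (bob_meas b y)" for b y
      using alice[of 0 b y] alice[of 1 b y] by simp
  qed (simp add: steered_carrier)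
qed

section \<open>Pure steered states\<close>

lemma eq_kron_vecI:
  assumes \<psi>: "\<psi> \<in> carrier_vec (m*n)" and u: "u \<in> carrier_vec m" and v: "v \<in> carrier_vec n"
    and entries: "\<And>k i. k < m \<Longrightarrow> i < n \<Longrightarrow> \<psi> $ (k*n+i) = u $ k * v $ i"
  shows "\<psi> = kron_vec u v"
proof (rule eq_vecI)
  show "dim_vec \<psi> = dim_vec (kron_vec u v)" using \<psi> u v unfolding kron_vec_def by simp
  fix l assume "l < dim_vec (kron_vec u v)"
  then have l: "l < m*n" using u v unfolding kron_vec_def by simp
  moreover from l have "0 < n" by (cases n) auto
  ultimately have "l div n < m" "l mod n < n" by (simp_all add: less_mult_imp_div_less)
  then have "\<psi> $ (l div n * n + l mod n) = u $ (l div n) * v $ (l mod n)" by (rule entries)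
  then show "\<psi> $ l = kron_vec u v $ l" unfolding kron_vec_def using l u v by simp
qed

lemma entangled_blocks_lin_indep:
  assumes "entangled 2 d \<psi>"
  shows "lin_indep2 d (\<lambda>i. \<psi> $ i) (\<lambda>i. \<psi> $ (d+i))"
  unfolding lin_indep2_def
proof (intro allI impI)
  fix a b :: complex assume dep: "\<forall>i<d. a * \<psi> $ i + b * \<psi> $ (d+i) = 0"
  have \<psi>: "\<psi> \<in> carrier_vec (2*d)" and not_product: "\<not> (\<exists>u \<in> carrier_vec 2. \<exists>v \<in> carrier_vec d. \<psi> = kron_vec u v)"
    using assms unfolding entangled_def by auto
  show "a = 0 \<and> b = 0"
  proof (rule ccontr)
    assume nonzero: "\<not> (a = 0 \<and> b = 0)"
    obtain u0 u1 :: complex and v where v: "v \<in> carrier_vec d"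
      and blocks: "\<And>i. i < d \<Longrightarrow> \<psi> $ i = u0 * v $ i \<and> \<psi> $ (d+i) = u1 * v $ i"
    proof (cases "b = 0")
      case True
      with nonzero dep have "\<psi> $ i = 0" if "i < d" for i using that by simp
      then show ?thesis by (intro that[of "vec d (\<lambda>i. \<psi> $ (d+i))" 0 1]) auto
    next
      case False
      with dep have "\<psi> $ (d+i) = (-a/b) * \<psi> $ i" if "i < d" for i
        using that by (simp add: field_simps add_eq_0_iff2)
      then show ?thesis by (intro that[of "vec d (\<lambda>i. \<psi> $ i)" 1 "-a/b"]) auto
    qed
    have "\<psi> = kron_vec (vec 2 (\<lambda>k. if k = 0 then u0 else u1)) v"
      by (rule eq_kron_vecI[OF \<psi> _ v]) (auto dest!: less_2_cases simp: blocks)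
    with v not_product show False by (metis vec_carrier)
  qed
qed

lemma lin_indep2_combination:
  assumes ind: "lin_indep2 n w0 w1" and det: "p0 * r1 - p1 * r0 \<noteq> 0"
  shows "lin_indep2 n (\<lambda>i. p0 * w0 i + p1 * w1 i) (\<lambda>i. r0 * w0 i + r1 * w1 i)"
  unfolding lin_indep2_def
proof (intro allI impI)
  fix a b assume "\<forall>i<n. a * (p0 * w0 i + p1 * w1 i) + b * (r0 * w0 i + r1 * w1 i) = 0"
  then have "\<forall>i<n. (a*p0 + b*r0) * w0 i + (a*p1 + b*r1) * w1 i = 0"
    by (simp add: algebra_simps)
  then have c: "a*p0 + b*r0 = 0" "a*p1 + b*r1 = 0" using ind unfolding lin_indep2_def by blast+
  have "a * (p0 * r1 - p1 * r0) = r1 * (a*p0 + b*r0) - r0 * (a*p1 + b*r1)"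
    by (simp add: algebra_simps)
  moreover have "b * (p0 * r1 - p1 * r0) = p0 * (a*p1 + b*r1) - p1 * (a*p0 + b*r0)"
    by (simp add: algebra_simps)
  ultimately have "a * (p0 * r1 - p1 * r0) = 0" "b * (p0 * r1 - p1 * r0) = 0"
    unfolding c by simp_all
  with det show "a = 0 \<and> b = 0" by simp
qed

lemma qform_rank_one:
  assumes "\<And>i j. i < n \<Longrightarrow> j < n \<Longrightarrow> A $$ (i,j) = \<kappa> * x i * cnj (x j)"
  shows "qform n A v = \<kappa> * cnj (cinner n x v) * cinner n x v"
proof -
  have "qform n A v = \<kappa> * (\<Sum>i<n. \<Sum>j<n. (cnj (v i) * x i) * (cnj (x j) * v j))"
    unfolding qform_def using assms by (simp add: sum_distrib_left algebra_simps)
  also have "\<dots> = \<kappa> * ((\<Sum>i<n. cnj (v i) * x i) * (\<Sum>j<n. cnj (x j) * v j))"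
    by (simp only: sum_product)
  also have "(\<Sum>i<n. cnj (v i) * x i) = cnj (cinner n x v)"
    unfolding cinner_def by (simp add: mult.commute)
  finally show ?thesis unfolding cinner_def by (simp add: mult.assoc)
qed

text \<open>\<open>(\<langle>q| \<otimes> 1) \<psi>\<close> for \<open>\<psi> \<in> C\<^sup>2 \<otimes> C\<^sup>d\<close> and a real vector \<open>q \<in> R\<^sup>2\<close>.\<close>
definition bra_fst2 :: "(nat \<Rightarrow> real) \<Rightarrow> nat \<Rightarrow> complex vec \<Rightarrow> nat \<Rightarrow> complex" where
  "bra_fst2 q d \<psi> i = complex_of_real (q 0) * \<psi> $ i + complex_of_real (q 1) * \<psi> $ (d+i)"

lemma lin_indep2_bra_fst2:
  assumes "entangled 2 d \<psi>" and "q 0 * r 1 - q 1 * r 0 \<noteq> 0"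
  shows "lin_indep2 d (bra_fst2 q d \<psi>) (bra_fst2 r d \<psi>)"
proof -
  have "complex_of_real (q 0) * complex_of_real (r 1) - complex_of_real (q 1) * complex_of_real (r 0) \<noteq> 0"
    using assms(2) by (metis of_real_diff of_real_eq_0_iff of_real_mult)
  then show ?thesis
    unfolding bra_fst2_def by (rule lin_indep2_combination[OF entangled_blocks_lin_indep[OF assms(1)]])
qed

lemma index_steered_rank_one:
  assumes M: "M \<in> carrier_mat 2 2" and Q: "Q \<in> carrier_mat 2 2" and \<rho>: "\<rho> \<in> carrier_mat (2*2*d) (2*2*d)"
    and pure: "ptrace_fst 2 (2*d) (kron (kron M (1\<^sub>m 2)) (1\<^sub>m d) * \<rho>) = c \<cdot>\<^sub>m outer \<psi> \<psi>"
    and \<psi>: "\<psi> \<in> carrier_vec (2*d)" and ij: "i < d" "j < d"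
  shows "steered d \<rho> M Q $$ (i,j) =
     (\<Sum>\<beta><2. \<Sum>\<beta>'<2. Q $$ (\<beta>,\<beta>') * (c * (\<psi> $ (\<beta>'*d+i) * cnj (\<psi> $ (\<beta>*d+j)))))"
proof -
  have "steered d \<rho> M Q $$ (i,j) = (\<Sum>\<beta><2. \<Sum>\<beta>'<2. Q $$ (\<beta>,\<beta>') *
      (\<Sum>\<alpha><2. \<Sum>\<alpha>'<2. M $$ (\<alpha>,\<alpha>') * \<rho> $$ (\<alpha>'*(2*d) + (\<beta>'*d+i), \<alpha>*(2*d) + (\<beta>*d+j))))"
    unfolding index_steered[OF M Q \<rho> ij] by (simp add: numeral_2_eq_2 lessThan_Suc algebra_simps)
  also have "\<dots> = (\<Sum>\<beta><2. \<Sum>\<beta>'<2. Q $$ (\<beta>,\<beta>') * (c * (\<psi> $ (\<beta>'*d+i) * cnj (\<psi> $ (\<beta>*d+j)))))"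
  proof (intro sum.cong refl arg_cong2[where f = "(*)"])
    fix \<beta> \<beta>' :: nat assume "\<beta> \<in> {..<2}" "\<beta>' \<in> {..<2}"
    then have I: "\<beta>'*d+i < 2*d" "\<beta>*d+j < 2*d" using ij block_index_less by auto
    show "(\<Sum>\<alpha><2. \<Sum>\<alpha>'<2. M $$ (\<alpha>,\<alpha>') * \<rho> $$ (\<alpha>'*(2*d) + (\<beta>'*d+i), \<alpha>*(2*d) + (\<beta>*d+j)))
        = c * (\<psi> $ (\<beta>'*d+i) * cnj (\<psi> $ (\<beta>*d+j)))"
      using index_ptrace_fst_kron_kron_one[OF M \<rho> I] I \<psi> unfolding pure outer_def by simp
  qed
  finally show ?thesis .
qed

lemma qform_steered_real_rank_one2:
  assumes M: "M \<in> carrier_mat 2 2" and \<rho>: "\<rho> \<in> carrier_mat (2*2*d) (2*2*d)"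
    and pure: "ptrace_fst 2 (2*d) (kron (kron M (1\<^sub>m 2)) (1\<^sub>m d) * \<rho>) = c \<cdot>\<^sub>m outer \<psi> \<psi>"
    and \<psi>: "\<psi> \<in> carrier_vec (2*d)"
  shows "qform d (steered d \<rho> M (real_rank_one2 w q)) v
      = (c * complex_of_real w) * cnj (cinner d (bra_fst2 q d \<psi>) v) * cinner d (bra_fst2 q d \<psi>) v"
proof (rule qform_rank_one)
  fix i j assume ij: "i < d" "j < d"
  show "steered d \<rho> M (real_rank_one2 w q) $$ (i,j) =
      (c * complex_of_real w) * bra_fst2 q d \<psi> i * cnj (bra_fst2 q d \<psi> j)"
    unfolding index_steered_rank_one[OF M real_rank_one2_carrier \<rho> pure \<psi> ij]
    by (simp add: real_rank_one2_def bra_fst2_def numeral_2_eq_2 lessThan_Suc algebra_simps)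
qed

theorem theorem4:
  fixes d :: nat and \<rho> :: "complex mat" and M :: "nat \<Rightarrow> nat \<Rightarrow> complex mat"
  assumes state: "density (2*2*d) \<rho>"
    and rank2: "mrank (2*2*d) \<rho> = 2"
    and povm0: "povm2 2 (M 0 0) (M 1 0)"
    and povm1: "povm2 2 (M 0 1) (M 1 1)"
    and cond: "\<forall>a\<in>bits.
       mrank (2*d) (ptrace_fst 2 (2*d) (kron (kron (M a 0) (1\<^sub>m 2)) (1\<^sub>m d) * \<rho>)) = 1 \<and>
       (\<exists>\<psi> (c::complex). entangled 2 d \<psi> \<and>
          ptrace_fst 2 (2*d) (kron (kron (M a 0) (1\<^sub>m 2)) (1\<^sub>m d) * \<rho>) = c \<cdot>\<^sub>m outer \<psi> \<psi>)"
  shows "\<exists>Q :: nat \<Rightarrow> nat \<Rightarrow> complex mat.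
           projective2 2 (Q 0 0) (Q 1 0) \<and> projective2 2 (Q 0 1) (Q 1 1) \<and>
           on_edge d (\<lambda>a b x y. ptrace_fst (2*2) d (kron (kron (M a x) (Q b y)) (1\<^sub>m d) * \<rho>))"
proof -
  obtain \<psi> c where \<psi>: "\<And>a. a \<in> bits \<Longrightarrow> entangled 2 d (\<psi> a)"
    and pure: "\<And>a. a \<in> bits \<Longrightarrow>
      ptrace_fst 2 (2*d) (kron (kron (M a 0) (1\<^sub>m 2)) (1\<^sub>m d) * \<rho>) = c a \<cdot>\<^sub>m outer (\<psi> a) (\<psi> a)"
    using cond by metis
  have \<rho>: "\<rho> \<in> carrier_mat (2*2*d) (2*2*d)" using state psd_carrier unfolding density_def by blast
  have M: "M a 0 \<in> carrier_mat 2 2" if "a \<in> bits" for a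
    using that povm0 psd_carrier unfolding povm2_def by auto
  have "on_edge d (\<lambda>a b x y. steered d \<rho> (M a x) (bob_meas b y))"
  proof (rule on_edge_if_rank_one_supports[where \<chi> = "\<lambda>a b y. bra_fst2 (bob_vec b y) d (\<psi> a)"])
    show "no_signaling d (\<lambda>a b x y. steered d \<rho> (M a x) (bob_meas b y))"
      by (rule no_signaling_steered_bob_meas[OF state povm0 povm1])
    show "qform d (steered d \<rho> (M a 0) (bob_meas b y)) v = 0"
      if "a \<in> bits" and "cinner d (bra_fst2 (bob_vec b y) d (\<psi> a)) v = 0" for a b y v
    proof -
      have "\<psi> a \<in> carrier_vec (2*d)" using \<psi>[OF that(1)] unfolding entangled_def by simp
      from qform_steered_real_rank_one2[OF M[OF that(1)] \<rho> pure[OF that(1)] this] that(2)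
      show ?thesis unfolding bob_meas_def by simp
    qed
    show "lin_indep2 d (bra_fst2 (bob_vec b 0) d (\<psi> a)) (bra_fst2 (bob_vec b' 1) d (\<psi> a))"
      if "a \<in> bits" "b \<in> bits" "b' \<in> bits" for a b b'
      using lin_indep2_bra_fst2[OF \<psi>[OF that(1)] bob_vec_det[OF that(2,3)]] .
  qed
  then show ?thesis
    unfolding steered_def using projective2_bob_meas by blast
qed

end
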